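(* Let $d$ be a tree degree sequence with $n(d)\geq 3$. Then $$\nu^{\mathcal T}_{\max}(d)=\min\left\{ \left\lfloor \frac{n(d)}{2}\right\rfloor,\; n(d)-n_1(d)\right\}.$$
   Context: All graphs are finite, simple and undirected. The degree sequence of a graph is the nonincreasing sequence of its vertex degrees. A tree degree sequence is the degree sequence of some tree. For a finite sequence $d$ of integers, $n(d)$ is the number of its elements and $n_i(d)$ is the number of its elements equal to $i$. $\nu(G)$ denotes the matching number of $G$. For a tree degree sequence $d$, $\nu^{\mathcal T}_{\max}(d)=\max\{\nu(T): T \text{ a tree with degree sequence } d\}$. *)

theory Defs
  imports Main
begin

definition simple_graph :: "nat set \<Rightarrow> nat set set \<Rightarrow> bool" where
  "simple_graph V E \<longleftrightarrow> finite V \<and> (\<forall>e\<in>E. \<exists>u v. e = {u, v} \<and> u \<noteq> v \<and> u \<in> V \<and> v \<in> V)"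

definition adj :: "nat set set \<Rightarrow> nat \<Rightarrow> nat \<Rightarrow> bool" where
  "adj E u v \<longleftrightarrow> {u, v} \<in> E"

definition degree :: "nat set set \<Rightarrow> nat \<Rightarrow> nat" where
  "degree E v = card {e \<in> E. v \<in> e}"

fun is_walk :: "nat set set \<Rightarrow> nat list \<Rightarrow> bool" where
  "is_walk E [] = False"
| "is_walk E [v] = True"
| "is_walk E (u # v # vs) = (adj E u v \<and> is_walk E (v # vs))"

definition connected :: "nat set \<Rightarrow> nat set set \<Rightarrow> bool" where
  "connected V E \<longleftrightarrow> (\<forall>u\<in>V. \<forall>v\<in>V. \<exists>p. is_walk E p \<and> hd p = u \<and> last p = v)"

definition is_cycle :: "nat set set \<Rightarrow> nat list \<Rightarrow> bool" where
  "is_cycle E c \<longleftrightarrow> length c \<ge> 3 \<and> distinct c \<and> is_walk E c \<and> adj E (last c) (hd c)"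

definition acyclic_graph :: "nat set set \<Rightarrow> bool" where
  "acyclic_graph E \<longleftrightarrow> (\<nexists>c. is_cycle E c)"

definition is_tree :: "nat set \<Rightarrow> nat set set \<Rightarrow> bool" where
  "is_tree V E \<longleftrightarrow> simple_graph V E \<and> V \<noteq> {} \<and> connected V E \<and> acyclic_graph E"

definition degree_sequence :: "nat set \<Rightarrow> nat set set \<Rightarrow> nat list" where
  "degree_sequence V E = rev (sort (map (degree E) (sorted_list_of_set V)))"

definition tree_degree_sequence :: "nat list \<Rightarrow> bool" where
  "tree_degree_sequence d \<longleftrightarrow> (\<exists>V E. is_tree V E \<and> degree_sequence V E = d)"

definition is_matching :: "nat set set \<Rightarrow> nat set set \<Rightarrow> bool" where
  "is_matching E M \<longleftrightarrow> M \<subseteq> E \<and> (\<forall>e\<in>M. \<forall>f\<in>M. e \<noteq> f \<longrightarrow> e \<inter> f = {})"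

definition matching_number :: "nat set set \<Rightarrow> nat" where
  "matching_number E = Max {card M | M. is_matching E M}"

definition nu_T_max :: "nat list \<Rightarrow> nat" where
  "nu_T_max d = Max {matching_number E | V E. is_tree V E \<and> degree_sequence V E = d}"

end

theory Submission
  imports Defs "HOL-Library.Multiset"
begin

text \<open>Upper bound: the edges of a matching are disjoint 2-sets, so there are at most \<open>n/2\<close> of
  them; and in a tree on at least three vertices no edge joins two leaves, so picking a non-leaf
  endpoint of each matching edge embeds the matching into the \<open>n - n\<^sub>1\<close> non-leaves.

  Lower bound: the degree multisets of trees on \<open>n \<ge> 2\<close> vertices are exactly the multisets of
  \<open>n\<close> positive integers summing to \<open>2(n - 1)\<close>. Such a multiset is realised, together with a
  large matching, by induction: if some degree \<open>d + 1 \<ge> 3\<close> occurs, hang a pendant path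
  \<open>x - u - w\<close> (if a degree 2 occurs) or a single leaf onto a vertex of degree \<open>d\<close> in a
  realisation of the smaller multiset; the pendant path contributes the new matching edge
  \<open>{u, w}\<close>. If all degrees are at most 2 the tree is a path and the same operations apply.\<close>

section \<open>Walks in simple graphs\<close>

lemma adj_commute: "adj E a b = adj E b a"
  by (simp add: adj_def insert_commute)

lemma is_walk_nonempty: "is_walk E p \<Longrightarrow> p \<noteq> []"
  by (cases p) auto

lemma is_walk_Cons_iff: "is_walk E (a # p) \<longleftrightarrow> p = [] \<or> adj E a (hd p) \<and> is_walk E p"
  by (cases p) auto

lemma is_walk_append_iff:
  assumes "xs \<noteq> []" and "ys \<noteq> []"
  shows "is_walk E (xs @ ys) \<longleftrightarrow> is_walk E xs \<and> is_walk E ys \<and> adj E (last xs) (hd ys)"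
  using assms by (induction xs) (auto simp: is_walk_Cons_iff)

lemma is_walk_mono: "is_walk E p \<Longrightarrow> E \<subseteq> E' \<Longrightarrow> is_walk E' p"
  by (induction E p rule: is_walk.induct) (auto simp: adj_def)

lemma is_walk_nth_adj: "is_walk E p \<Longrightarrow> Suc i < length p \<Longrightarrow> adj E (p ! i) (p ! Suc i)"
proof (induction E p arbitrary: i rule: is_walk.induct)
  case (3 E u v vs)
  then show ?case by (cases i) auto
qed auto

lemma is_walk_drop: "is_walk E p \<Longrightarrow> i < length p \<Longrightarrow> is_walk E (drop i p)"
proof (induction E p arbitrary: i rule: is_walk.induct)
  case (3 E u v vs)
  then show ?case by (cases i) auto
qed auto

lemma is_walk_remove_edge:
  "is_walk (insert e E) p \<Longrightarrow> \<forall>a\<in>set p. \<forall>b\<in>set p. {a, b} \<noteq> e \<Longrightarrow> is_walk E p"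
  by (induction "insert e E" p rule: is_walk.induct) (auto simp: adj_def)

lemma is_cycle_rotate1: "is_cycle E c \<Longrightarrow> is_cycle E (rotate1 c)"
proof -
  assume c: "is_cycle E c"
  then obtain a cs where c_eq: "c = a # cs" and "cs \<noteq> []"
    unfolding is_cycle_def by (cases c) force+
  with c have "is_walk E cs" "adj E a (hd cs)" "adj E (last cs) a"
    unfolding is_cycle_def by (auto simp: is_walk_Cons_iff)
  with \<open>cs \<noteq> []\<close> have "is_walk E (cs @ [a])" "adj E (last (cs @ [a])) (hd (cs @ [a]))"
    by (simp_all add: is_walk_append_iff)
  with c c_eq show ?thesis unfolding is_cycle_def by auto
qed

lemma is_cycle_rotate: "is_cycle E c \<Longrightarrow> is_cycle E (rotate n c)"
  by (induction n) (auto simp: is_cycle_rotate1)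

lemma simple_graph_edgeE:
  assumes "simple_graph V E" and "e \<in> E"
  obtains u v where "e = {u, v}" "u \<noteq> v" "u \<in> V" "v \<in> V"
  using assms unfolding simple_graph_def by blast

lemma simple_graph_edge_subset: "simple_graph V E \<Longrightarrow> e \<in> E \<Longrightarrow> e \<subseteq> V"
  by (erule simple_graph_edgeE) auto

lemma simple_graph_card_edge: "simple_graph V E \<Longrightarrow> e \<in> E \<Longrightarrow> card e = 2"
  by (erule simple_graph_edgeE) auto

lemma simple_graph_finite_edges: "simple_graph V E \<Longrightarrow> finite E"
  by (metis Pow_iff finite_Pow_iff finite_subset simple_graph_def simple_graph_edge_subset subsetI)

lemma simple_graph_adjD: "simple_graph V E \<Longrightarrow> adj E a b \<Longrightarrow> a \<in> V \<and> b \<in> V \<and> a \<noteq> b"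
  unfolding adj_def simple_graph_def by (metis doubleton_eq_iff)

lemma degree_pos_if_adj: "finite E \<Longrightarrow> adj E v y \<Longrightarrow> 0 < degree E v"
  unfolding degree_def adj_def by (subst card_gt_0_iff) auto

lemma degree_ge_two_other_neighbour:
  assumes "simple_graph V E" and "2 \<le> degree E z"
  obtains y where "adj E z y" and "y \<noteq> q"
proof -
  have "\<not> {e \<in> E. z \<in> e} \<subseteq> {{q, z}}"
    using assms(2) card_mono[of "{{q, z}}" "{e \<in> E. z \<in> e}"] unfolding degree_def by auto
  then obtain e where e: "e \<in> E" "z \<in> e" "e \<noteq> {q, z}" by blast
  then obtain y where "e = {z, y}" "y \<noteq> z"
    using assms(1) by (elim simple_graph_edgeE) auto
  with e that show thesis by (auto simp: adj_def insert_commute)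
qed

lemma degree_one_unique_edge:
  assumes "simple_graph V E" and "degree E v = 1"
  obtains u where "u \<noteq> v" "u \<in> V" "{v, u} \<in> E" "\<forall>e\<in>E. v \<in> e \<longrightarrow> e = {v, u}"
proof -
  obtain e0 where star: "{e \<in> E. v \<in> e} = {e0}"
    using assms(2) unfolding degree_def by (auto simp: card_1_singleton_iff)
  then have "e0 \<in> E" "v \<in> e0" by auto
  then obtain u where "e0 = {v, u}" "u \<noteq> v" "u \<in> V"
    using assms(1) by (elim simple_graph_edgeE) auto
  with star that show thesis by blast
qed

section \<open>Trees\<close>

lemma is_treeD:
  assumes "is_tree V E"
  shows "simple_graph V E" "finite V" "finite E" "connected V E" "acyclic_graph E"
  using assms simple_graph_finite_edges unfolding is_tree_def simple_graph_def by blast+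

lemma single_vertex_tree: "is_tree {a} {}"
  unfolding is_tree_def simple_graph_def connected_def acyclic_graph_def is_cycle_def
  by (auto simp: adj_def intro!: exI[of _ "[a]"])

lemma tree_has_neighbour:
  assumes t: "is_tree V E" and v: "v \<in> V" and "2 \<le> card V"
  obtains y where "adj E v y"
proof -
  obtain w where w: "w \<in> V" "w \<noteq> v"
    using \<open>2 \<le> card V\<close> is_treeD(2)[OF t] v
    by (metis card_le_Suc0_iff_eq not_less_eq_eq numeral_2_eq_2)
  then obtain p where p: "is_walk E p" "hd p = v" "last p = w"
    using is_treeD(4)[OF t] v unfolding connected_def by blast
  then obtain q where "p = v # q" "q \<noteq> []"
    using w(2) is_walk_nonempty by (metis last_ConsL list.collapse)
  with p have "adj E v (hd q)" by (simp add: is_walk_Cons_iff)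
  with that show thesis .
qed

lemma tree_degree_pos: "is_tree V E \<Longrightarrow> v \<in> V \<Longrightarrow> 2 \<le> card V \<Longrightarrow> 0 < degree E v"
  using degree_pos_if_adj is_treeD(3) by (metis tree_has_neighbour)

lemma is_walk_within_isolated_edge:
  "is_walk E p \<Longrightarrow> \<forall>y. adj E a y \<longrightarrow> y = b \<Longrightarrow> \<forall>y. adj E b y \<longrightarrow> y = a \<Longrightarrow> hd p \<in> {a, b}
    \<Longrightarrow> set p \<subseteq> {a, b}"
  by (induction E p rule: is_walk.induct) auto

lemma tree_no_edge_between_leaves:
  assumes t: "is_tree V E" and "3 \<le> card V" and e: "{a, b} \<in> E"
    and "degree E a = 1" and "degree E b = 1"
  shows False
proof -
  have sg: "simple_graph V E" using is_treeD[OF t] by simp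
  have ab: "a \<noteq> b" "a \<in> V" using simple_graph_adjD[OF sg] e by (auto simp: adj_def)
  have only_nb: "\<forall>y. adj E x y \<longrightarrow> y = x'" if "{x, x'} \<in> E" "degree E x = 1" for x x'
  proof -
    obtain u where "\<forall>e\<in>E. x \<in> e \<longrightarrow> e = {x, u}" "u \<noteq> x"
      using degree_one_unique_edge[OF sg \<open>degree E x = 1\<close>] by blast
    with that(1) show ?thesis unfolding adj_def by (metis doubleton_eq_iff insertI1)
  qed
  have "\<not> V \<subseteq> {a, b}"
  proof
    assume "V \<subseteq> {a, b}"
    then have "card V \<le> card {a, b}" by (simp add: card_mono)
    also have "\<dots> \<le> 2" by (simp add: card_insert_le_m1)
    finally show False using \<open>3 \<le> card V\<close> by simp
  qed
  then obtain w where w: "w \<in> V" "w \<notin> {a, b}" by blast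
  then obtain p where p: "is_walk E p" "hd p = a" "last p = w"
    using is_treeD(4)[OF t] ab unfolding connected_def by blast
  have "set p \<subseteq> {a, b}"
    using is_walk_within_isolated_edge[OF p(1)] only_nb[OF e] only_nb[of b a] e p(2) assms(4,5)
    by (simp add: insert_commute)
  moreover have "w \<in> set p" using p is_walk_nonempty by (metis last_in_set)
  ultimately show False using w by auto
qed

text \<open>A second neighbour of the end of a path, lying on the path, would close a cycle.\<close>

lemma acyclic_path_end_degree_le_one:
  assumes sg: "simple_graph V E" and ac: "acyclic_graph E"
    and p: "distinct p" "is_walk E p" "2 \<le> length p"
    and closed: "\<forall>y. adj E (last p) y \<longrightarrow> y \<in> set p"
  shows "degree E (last p) \<le> 1"
proof (rule ccontr)
  define z where "z = last p"
  define q where "q = p ! (length p - 2)"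
  have z_nth: "z = p ! (length p - 1)"
    unfolding z_def using p(3) by (subst last_conv_nth) auto
  have "adj E q z"
    unfolding q_def z_nth using is_walk_nth_adj[OF p(2), of "length p - 2"] p(3)
    by (simp add: Suc_diff_Suc numeral_2_eq_2)
  assume "\<not> degree E (last p) \<le> 1"
  then have "2 \<le> degree E z" unfolding z_def by simp
  then obtain y where y: "adj E z y" "y \<noteq> q"
    by (rule degree_ge_two_other_neighbour[OF sg])
  then obtain i where i: "i < length p" "p ! i = y"
    using closed unfolding z_def by (metis in_set_conv_nth)
  have "i \<noteq> length p - 1" using i simple_graph_adjD[OF sg y(1)] z_nth by auto
  moreover have "i \<noteq> length p - 2" using i y(2) unfolding q_def by auto
  ultimately have "3 \<le> length (drop i p)" using i(1) by simp
  moreover have "hd (drop i p) = y" "last (drop i p) = z"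
    using i unfolding z_def by (simp_all add: hd_drop_conv_nth)
  ultimately have "is_cycle E (drop i p)"
    unfolding is_cycle_def using p is_walk_drop[OF p(2) i(1)] y(1) by simp
  with ac show False unfolding acyclic_graph_def by blast
qed

lemma tree_has_leaf:
  assumes t: "is_tree V E" and "2 \<le> card V"
  obtains v where "v \<in> V" "degree E v = 1"
proof -
  note sg = is_treeD(1)[OF t]
  define P where "P p \<longleftrightarrow> distinct p \<and> is_walk E p \<and> set p \<subseteq> V \<and> 2 \<le> length p" for p
  obtain v0 where v0: "v0 \<in> V"
    using \<open>2 \<le> card V\<close> by (metis all_not_in_conv card.empty not_numeral_le_zero)
  then obtain y0 where "adj E v0 y0"
    using tree_has_neighbour[OF t _ \<open>2 \<le> card V\<close>] by blast
  then have "P [v0, y0]" unfolding P_def using simple_graph_adjD[OF sg] by auto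
  moreover have "length p < Suc (card V)" if "P p" for p
    using that card_mono[OF is_treeD(2)[OF t]] unfolding P_def
      by (metis distinct_card le_imp_less_Suc)
  ultimately obtain p where Pp: "P p" and longest: "\<And>p'. P p' \<Longrightarrow> length p' \<le> length p"
    using ex_has_greatest_nat[of P "[v0, y0]" length "Suc (card V)"] by blast
  have "y \<in> set p" if "adj E (last p) y" for y
  proof (rule ccontr)
    assume "y \<notin> set p"
    with Pp that have "P (p @ [y])"
      unfolding P_def
        using simple_graph_adjD[OF sg] is_walk_nonempty by (auto simp: is_walk_append_iff)
    then show False using longest by fastforce
  qed
  then have "degree E (last p) \<le> 1"
    using acyclic_path_end_degree_le_one[OF sg is_treeD(5)[OF t]] Pp unfolding P_def by blast
  moreover have "last p \<in> V"
    using Pp unfolding P_def by (metis last_in_set list.size(3) not_numeral_le_zero subsetD)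
  moreover have "0 < degree E (last p)"
    using tree_degree_pos[OF t calculation(2) \<open>2 \<le> card V\<close>] .
  ultimately show thesis using that by simp
qed

lemma is_walk_avoid_leaf:
  assumes leaf: "\<forall>e\<in>E. v \<in> e \<longrightarrow> e = {v, u}" and uv: "u \<noteq> v"
  shows "is_walk E p \<Longrightarrow> hd p \<noteq> v \<Longrightarrow> last p \<noteq> v \<Longrightarrow>
    \<exists>q. is_walk (E - {{v, u}}) q \<and> hd q = hd p \<and> last q = last p"
proof (induction p rule: length_induct)
  case (1 p)
  show ?case
  proof (cases p)
    case Nil then show ?thesis using "1.prems" by simp
  next
    case (Cons a r)
    show ?thesis
    proof (cases r)
      case Nil
      then show ?thesis using Cons by (intro exI[of _ "[a]"]) simp
    next
      case (Cons b r')
      have pa: "p = a # b # r'" using \<open>p = a # r\<close> Cons by simp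
      have av: "a \<noteq> v" using "1.prems" pa by simp
      have ab: "adj E a b" and wb: "is_walk E (b # r')" using "1.prems"(1) pa by auto
      show ?thesis
      proof (cases "b = v")
        case False
        obtain q where q: "is_walk (E - {{v, u}}) q" "hd q = b" "last q = last (b # r')"
          using "1.IH"[rule_format, of "b # r'"] pa wb False "1.prems"(3) by auto
        have "{a, b} \<noteq> {v, u}" using av False by (auto simp: doubleton_eq_iff)
        then have "adj (E - {{v, u}}) a (hd q)" using ab q(2) unfolding adj_def by simp
        then have "is_walk (E - {{v, u}}) (a # q)" using q(1) by (simp add: is_walk_Cons_iff)
        moreover have "last (a # q) = last p" using q is_walk_nonempty[OF q(1)] pa by simp
        ultimately show ?thesis using pa by (intro exI[of _ "a # q"]) simp
      next
        case True
        text \<open>The walk passes the leaf as \<open>u, v, u\<close>; continue from the second \<open>u\<close>.\<close>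
        have "{a, v} \<in> E" using ab True unfolding adj_def by simp
        then have "{a, v} = {v, u}" using leaf by auto
        then have au: "a = u" using av by (auto simp: doubleton_eq_iff)
        have "r' \<noteq> []" using "1.prems"(3) pa True by auto
        then obtain c r'' where r': "r' = c # r''" by (cases r') auto
        have "adj E v c" using wb True r' by simp
        then have "{v, c} \<in> E" unfolding adj_def .
        then have "{v, c} = {v, u}" using leaf by auto
        then have cu: "c = u" using uv by (auto simp: doubleton_eq_iff)
        have wc: "is_walk E (c # r'')" using wb r' by simp
        obtain q where q: "is_walk (E - {{v, u}}) q" "hd q = c" "last q = last (c # r'')"
          using "1.IH"[rule_format, of "c # r''"] pa r' wc cu uv "1.prems"(3) by auto
        show ?thesis using q pa r' au cu by (intro exI[of _ q]) simp
      qed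
    qed
  qed
qed

lemma tree_remove_leaf:
  assumes t: "is_tree V E" and "v \<in> V" and "degree E v = 1"
  obtains u where "{v, u} \<in> E" "is_tree (V - {v}) (E - {{v, u}})"
proof -
  note sg = is_treeD(1)[OF t]
  obtain u where u: "u \<noteq> v" "u \<in> V" "{v, u} \<in> E" and leaf: "\<forall>e\<in>E. v \<in> e \<longrightarrow> e = {v, u}"
    using degree_one_unique_edge[OF sg \<open>degree E v = 1\<close>] by blast
  have "simple_graph (V - {v}) (E - {{v, u}})"
    unfolding simple_graph_def
  proof (intro conjI ballI)
    show "finite (V - {v})" using is_treeD(2)[OF t] by simp
    fix e assume e: "e \<in> E - {{v, u}}"
    then obtain a b where "e = {a, b}" "a \<noteq> b" "a \<in> V" "b \<in> V"
      by (meson DiffD1 sg simple_graph_edgeE)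
    moreover have "v \<notin> e" using e leaf by auto
    ultimately show "\<exists>a b. e = {a, b} \<and> a \<noteq> b \<and> a \<in> V - {v} \<and> b \<in> V - {v}" by blast
  qed
  moreover have "connected (V - {v}) (E - {{v, u}})"
    using is_treeD(4)[OF t] is_walk_avoid_leaf[OF leaf u(1)] unfolding connected_def
      by (metis Diff_iff singletonI)
  moreover have "acyclic_graph (E - {{v, u}})"
    using is_treeD(5)[OF t] is_walk_mono[of "E - {{v, u}}" _ E]
    unfolding acyclic_graph_def is_cycle_def adj_def by blast
  moreover have "V - {v} \<noteq> {}" using u by auto
  ultimately show thesis using that u(3) unfolding is_tree_def by blast
qed

lemma tree_card_edges: "is_tree V E \<Longrightarrow> card E + 1 = card V"
proof (induction "card V" arbitrary: V E)
  case 0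
  then show ?case using is_treeD(2)[OF "0.prems"] unfolding is_tree_def by simp
next
  case (Suc n)
  note sg = is_treeD(1)[OF Suc.prems]
  show ?case
  proof (cases "n = 0")
    case True
    then obtain a where "V = {a}" using Suc.hyps(2) by (metis One_nat_def card_1_singleton_iff)
    have "E = {}"
    proof (rule equals0I)
      fix e assume "e \<in> E"
      then have "card e \<le> card {a}"
        using simple_graph_edge_subset[OF sg] \<open>V = {a}\<close> by (intro card_mono) auto
      with simple_graph_card_edge[OF sg \<open>e \<in> E\<close>] show False by simp
    qed
    then show ?thesis using Suc.hyps(2) True by simp
  next
    case False
    then have "2 \<le> card V" using Suc.hyps(2) by simp
    then obtain v where v: "v \<in> V" "degree E v = 1" using tree_has_leaf[OF Suc.prems] by blast
    then obtain u where u: "{v, u} \<in> E" "is_tree (V - {v}) (E - {{v, u}})"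
      using tree_remove_leaf[OF Suc.prems] by blast
    have "card (V - {v}) = n" using Suc.hyps(2) v by simp
    then have "card (E - {{v, u}}) + 1 = n" using Suc.hyps(1)[OF _ u(2)] by simp
    moreover have "card (E - {{v, u}}) + 1 = card E"
      using card_Suc_Diff1[OF is_treeD(3)[OF Suc.prems] u(1)] by simp
    ultimately show ?thesis using Suc.hyps(2) by simp
  qed
qed

lemma sum_degree_eq_twice_card_edges:
  assumes sg: "simple_graph V E"
  shows "(\<Sum>v\<in>V. degree E v) = 2 * card E"
proof -
  have fV: "finite V" using sg unfolding simple_graph_def by simp
  have fE: "finite E" using simple_graph_finite_edges[OF sg] .
  have "(\<Sum>v\<in>V. degree E v) = (\<Sum>v\<in>V. \<Sum>e\<in>E. if v \<in> e then 1 else 0)"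
    unfolding degree_def using sum.inter_filter[OF fE, of "\<lambda>_. 1::nat"] by simp
  also have "\<dots> = (\<Sum>e\<in>E. \<Sum>v\<in>V. if v \<in> e then 1 else 0)" by (rule sum.swap)
  also have "\<dots> = (\<Sum>e\<in>E. card {v \<in> V. v \<in> e})"
    using sum.inter_filter[OF fV, of "\<lambda>_. 1::nat"] by simp
  also have "\<dots> = (\<Sum>e\<in>E. 2)"
  proof (rule sum.cong)
    fix e assume "e \<in> E"
    then have "{v \<in> V. v \<in> e} = e" using simple_graph_edge_subset[OF sg] by blast
    then show "card {v \<in> V. v \<in> e} = 2" using simple_graph_card_edge[OF sg \<open>e \<in> E\<close>] by simp
  qed simp
  finally show ?thesis by simp
qed

lemma is_walk_rev: "is_walk E p \<Longrightarrow> is_walk E (rev p)"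
proof (induction E p rule: is_walk.induct)
  case (3 E u v vs)
  then show ?case using is_walk_append_iff[of "rev vs @ [v]" "[u]" E] by (simp add: adj_commute)
qed simp_all

lemma is_walk_join:
  assumes "is_walk E p" "is_walk E q" "last p = hd q"
  shows "is_walk E (p @ tl q)"
proof (cases "tl q = []")
  case False
  then have "adj E (hd q) (hd (tl q))" "is_walk E (tl q)"
    using assms(2) is_walk_Cons_iff[of E "hd q" "tl q"] is_walk_nonempty by (metis list.collapse)+
  then show ?thesis using assms False is_walk_nonempty by (simp add: is_walk_append_iff)
qed (use assms in simp)

lemma connected_if_all_reach:
  assumes "\<forall>a\<in>V. \<exists>p. is_walk E p \<and> hd p = a \<and> last p = x"
  shows "connected V E"
  unfolding connected_def
proof (intro ballI)
  fix a b assume "a \<in> V" "b \<in> V"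
  then obtain p q where p: "is_walk E p" "hd p = a" "last p = x"
    and q: "is_walk E q" "hd q = b" "last q = x" using assms by meson
  have "p \<noteq> []" "q \<noteq> []" using p q is_walk_nonempty by auto
  have "is_walk E (p @ tl (rev q))"
    using is_walk_join[OF p(1) is_walk_rev[OF q(1)]] p q \<open>q \<noteq> []\<close> by (simp add: hd_rev)
  moreover have "last (p @ tl (rev q)) = b"
  proof (cases "tl (rev q) = []")
    case True
    then have "rev q = [x]" using q(3) \<open>q \<noteq> []\<close> by (metis hd_rev list.collapse rev_is_Nil_conv)
    then show ?thesis
      using p(3) q(2) True by (metis hd_rev last.simps rev_singleton_conv append_Nil2)
  next
    case False
    then show ?thesis using q(2) \<open>q \<noteq> []\<close> by (metis last_appendR last_rev last_tl)
  qed
  ultimately show "\<exists>p. is_walk E p \<and> hd p = a \<and> last p = b"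
    using p(2) \<open>p \<noteq> []\<close> by (intro exI[of _ "p @ tl (rev q)"]) simp
qed

lemma simple_graph_add_leaf:
  assumes "simple_graph V E" "x \<in> V" "w \<notin> V"
  shows "simple_graph (insert w V) (insert {x, w} E)"
  using assms unfolding simple_graph_def by (metis finite_insert insert_iff)

lemma connected_add_leaf:
  assumes "connected V E" "x \<in> V"
  shows "connected (insert w V) (insert {x, w} E)"
proof (rule connected_if_all_reach[where x = x], intro ballI)
  fix a assume a: "a \<in> insert w V"
  show "\<exists>p. is_walk (insert {x, w} E) p \<and> hd p = a \<and> last p = x"
  proof (cases "a = w")
    case True
    have "is_walk (insert {x, w} E) [w, x]" by (simp add: adj_def insert_commute)
    then show ?thesis using True by fastforce
  next
    case False
    then obtain p where "is_walk E p" "hd p = a" "last p = x"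
      using assms a unfolding connected_def by auto
    then show ?thesis using is_walk_mono[of E p "insert {x, w} E"] by blast
  qed
qed

lemma acyclic_add_leaf:
  assumes sg: "simple_graph V E" and ac: "acyclic_graph E" and x: "x \<in> V" and w: "w \<notin> V"
  shows "acyclic_graph (insert {x, w} E)"
  unfolding acyclic_graph_def
proof
  let ?E = "insert {x, w} E"
  assume "\<exists>c. is_cycle ?E c"
  then obtain c where c: "is_cycle ?E c" by blast
  show False
  proof (cases "w \<in> set c")
    case False
    then have avoid: "\<forall>a\<in>set c. \<forall>b\<in>set c. {a, b} \<noteq> {x, w}" by (auto simp: doubleton_eq_iff)
    have "c \<noteq> []" using c unfolding is_cycle_def by auto
    then have "{last c, hd c} \<noteq> {x, w}" using avoid by simp
    then have "is_cycle E c"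
      using c is_walk_remove_edge[of "{x, w}" E c] avoid unfolding is_cycle_def adj_def by simp
    then show False using ac unfolding acyclic_graph_def by blast
  next
    case True
    text \<open>Rotated to start at the new leaf, the cycle would need two distinct neighbours of it,
      but its only neighbour is \<open>x\<close>.\<close>
    then obtain i where i: "i < length c" "c ! i = w" by (metis in_set_conv_nth)
    define c' where "c' = rotate i c"
    have c': "is_cycle ?E c'" unfolding c'_def using is_cycle_rotate[OF c] .
    have "hd c' = w" unfolding c'_def using i hd_rotate_conv_nth[of c i]
      by (metis length_greater_0_conv mod_less order.strict_trans1 zero_le)
    moreover have "3 \<le> length c'" using c' unfolding is_cycle_def by simp
    ultimately obtain y r where cr: "c' = w # y # r" "r \<noteq> []"
      by (metis One_nat_def Suc_1 hd_Cons_tl length_Cons list.size(3) not_less_eq_eq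
          numeral_3_eq_3 zero_le)
    have only_x: "z = x" if "adj ?E w z" for z
    proof -
      have "{w, z} \<notin> E" using simple_graph_edge_subset[OF sg] w by blast
      then have "{w, z} = {x, w}" using that unfolding adj_def by simp
      then show ?thesis using x w by (auto simp: doubleton_eq_iff)
    qed
    have "adj ?E w y" "adj ?E (last r) w" using c' cr unfolding is_cycle_def by simp_all
    then have "y = x" "last r = x" using only_x adj_commute by metis+
    moreover have "distinct (w # y # r)" using c' cr unfolding is_cycle_def by simp
    ultimately show False using \<open>r \<noteq> []\<close> by (metis distinct.simps(2) last_in_set list.set_intros(1))
  qed
qed

lemma tree_add_leaf: "is_tree V E \<Longrightarrow> x \<in> V \<Longrightarrow> w \<notin> V \<Longrightarrow> is_tree (insert w V) (insert {x, w} E)"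
  using simple_graph_add_leaf connected_add_leaf acyclic_add_leaf unfolding is_tree_def by blast

section \<open>Degree multisets\<close>

definition degree_mset :: "nat set \<Rightarrow> nat set set \<Rightarrow> nat multiset" where
  "degree_mset V E = image_mset (degree E) (mset_set V)"

lemma size_degree_mset: "finite V \<Longrightarrow> size (degree_mset V E) = card V"
  unfolding degree_mset_def by simp

lemma count_degree_mset: "finite V \<Longrightarrow> count (degree_mset V E) k = card {v \<in> V. degree E v = k}"
  unfolding degree_mset_def
proof (induction V rule: finite_induct)
  case (insert x F)
  have "{v \<in> insert x F. degree E v = k} =
      (if degree E x = k then insert x {v \<in> F. degree E v = k} else {v \<in> F. degree E v = k})"
    by auto
  then show ?case using insert by simp
qed simp

lemma degree_mset_memberE:
  assumes "finite V" "d \<in># degree_mset V E"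
  obtains x where "x \<in> V" "degree E x = d"
  using assms unfolding degree_mset_def by auto

lemma degree_add_leaf:
  assumes sg: "simple_graph V E" and x: "x \<in> V" and w: "w \<notin> V"
  shows "degree (insert {x, w} E) w = 1"
    and "degree (insert {x, w} E) x = Suc (degree E x)"
    and "y \<noteq> x \<Longrightarrow> y \<noteq> w \<Longrightarrow> degree (insert {x, w} E) y = degree E y"
proof -
  have no_w: "\<forall>e\<in>E. w \<notin> e" using simple_graph_edge_subset[OF sg] w by blast
  then have "{e \<in> insert {x, w} E. w \<in> e} = {{x, w}}" by auto
  then show "degree (insert {x, w} E) w = 1" unfolding degree_def by simp
  have "{e \<in> insert {x, w} E. x \<in> e} = insert {x, w} {e \<in> E. x \<in> e}" "{x, w} \<notin> E"
    using no_w by auto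
  then show "degree (insert {x, w} E) x = Suc (degree E x)"
    unfolding degree_def using simple_graph_finite_edges[OF sg] by simp
  assume "y \<noteq> x" "y \<noteq> w"
  then have "{e \<in> insert {x, w} E. y \<in> e} = {e \<in> E. y \<in> e}" by auto
  then show "degree (insert {x, w} E) y = degree E y" unfolding degree_def by simp
qed

lemma degree_mset_add_leaf:
  assumes sg: "simple_graph V E" and x: "x \<in> V" and w: "w \<notin> V"
    and D: "degree_mset V E = add_mset (degree E x) D"
  shows "degree_mset (insert w V) (insert {x, w} E) = add_mset (Suc (degree E x)) (add_mset 1 D)"
proof -
  let ?E = "insert {x, w} E"
  have fV: "finite V" using sg unfolding simple_graph_def by simp
  have V: "mset_set V = add_mset x (mset_set (V - {x}))"
    using fV x by (metis mset_set.remove)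
  then have "D = image_mset (degree E) (mset_set (V - {x}))"
    using D unfolding degree_mset_def by simp
  also have "\<dots> = image_mset (degree ?E) (mset_set (V - {x}))"
    using degree_add_leaf(3)[OF sg x w] fV w by (intro image_mset_cong) (metis DiffE finite_Diff
        finite_set_mset_mset_set singletonI)
  finally show ?thesis
    using V degree_add_leaf(1,2)[OF sg x w] fV w unfolding degree_mset_def by simp
qed

lemma exists_fresh_vertex: "finite V \<Longrightarrow> \<exists>w::nat. w \<notin> V"
  using ex_new_if_finite[OF infinite_UNIV_nat] by blast

lemma tree_attach_leaf:
  assumes t: "is_tree V E" and x: "x \<in> V" and D: "degree_mset V E = add_mset (degree E x) D"
  obtains w where "w \<notin> V" "is_tree (insert w V) (insert {x, w} E)"
    "degree_mset (insert w V) (insert {x, w} E) = add_mset (Suc (degree E x)) (add_mset 1 D)"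
proof -
  obtain w where "w \<notin> V" using exists_fresh_vertex[OF is_treeD(2)[OF t]] by blast
  then show thesis
    using that tree_add_leaf[OF t x] degree_mset_add_leaf[OF is_treeD(1)[OF t] x _ D] by blast
qed

section \<open>Matchings\<close>

lemma is_matching_mono: "is_matching E M \<Longrightarrow> E \<subseteq> E' \<Longrightarrow> is_matching E' M"
  unfolding is_matching_def by blast

lemma is_matching_insert_new_edge:
  assumes sg: "simple_graph V E" and m: "is_matching E M" and "u \<notin> V" "w \<notin> V"
    and "E \<subseteq> E'" "{u, w} \<in> E'"
  shows "is_matching E' (insert {u, w} M)" and "card (insert {u, w} M) = Suc (card M)"
proof -
  have ME: "M \<subseteq> E" using m unfolding is_matching_def by simp
  have disj: "{u, w} \<inter> f = {}" if "f \<in> M" for f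
  proof -
    have "f \<subseteq> V" using that ME simple_graph_edge_subset[OF sg] by blast
    then show ?thesis using \<open>u \<notin> V\<close> \<open>w \<notin> V\<close> by auto
  qed
  show "is_matching E' (insert {u, w} M)"
    using m disj \<open>E \<subseteq> E'\<close> \<open>{u, w} \<in> E'\<close> unfolding is_matching_def by (auto simp: Int_commute)
  have "{u, w} \<notin> M" using disj by fastforce
  moreover have "finite M" using ME simple_graph_finite_edges[OF sg] finite_subset by blast
  ultimately show "card (insert {u, w} M) = Suc (card M)" by simp
qed

lemma finite_matching_cards: "finite E \<Longrightarrow> finite {card M | M. is_matching E M}"
proof -
  assume "finite E"
  have "{card M | M. is_matching E M} \<subseteq> card ` Pow E" unfolding is_matching_def by auto
  then show ?thesis using \<open>finite E\<close> finite_subset by blast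
qed

lemma card_le_matching_number:
  assumes "finite E" "is_matching E M"
  shows "card M \<le> matching_number E"
  using finite_matching_cards[OF assms(1)] assms(2) unfolding matching_number_def
    by (auto intro: Max_ge)

lemma matching_number_le:
  assumes "finite E" "\<And>M. is_matching E M \<Longrightarrow> card M \<le> b"
  shows "matching_number E \<le> b"
proof -
  have "is_matching E {}" unfolding is_matching_def by simp
  then show ?thesis using finite_matching_cards[OF assms(1)] assms(2) unfolding matching_number_def
    by (auto intro!: Max.boundedI)
qed

lemma matching_card_le_half:
  assumes sg: "simple_graph V E" and m: "is_matching E M"
  shows "card M \<le> card V div 2"
proof -
  have ME: "M \<subseteq> E" using m unfolding is_matching_def by simp
  have fV: "finite V" using sg unfolding simple_graph_def by simp
  have "2 * card M = (\<Sum>e\<in>M. card e)"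
    using simple_graph_card_edge[OF sg] ME by (subst sum.cong[OF refl, of _ _ "\<lambda>_. 2"]) auto
  also have "\<dots> = card (\<Union>M)"
  proof (rule card_Union_disjoint[symmetric])
    show "pairwise disjnt M" using m unfolding is_matching_def pairwise_def disjnt_def by blast
    show "finite e" if "e \<in> M" for e
      using that ME simple_graph_card_edge[OF sg] by (metis card.infinite subsetD zero_neq_numeral)
  qed
  also have "\<dots> \<le> card V"
    using ME simple_graph_edge_subset[OF sg] fV by (intro card_mono) auto
  finally show ?thesis by simp
qed

lemma tree_matching_card_le_non_leaves:
  assumes t: "is_tree V E" and "3 \<le> card V" and m: "is_matching E M"
  shows "card M \<le> card V - count (degree_mset V E) 1"
proof -
  note sg = is_treeD(1)[OF t]
  have ME: "M \<subseteq> E" using m unfolding is_matching_def by simp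
  define g where "g e = (SOME v. v \<in> e \<and> degree E v \<noteq> 1)" for e
  have g: "g e \<in> e \<and> degree E (g e) \<noteq> 1" if e: "e \<in> M" for e
  proof -
    obtain a b where ab: "e = {a, b}" using ME e by (meson sg simple_graph_edgeE subsetD)
    then have "{a, b} \<in> E" using ME e by blast
    then have "\<not> (degree E a = 1 \<and> degree E b = 1)"
      using tree_no_edge_between_leaves[OF t \<open>3 \<le> card V\<close>] by blast
    then have "\<exists>v. v \<in> e \<and> degree E v \<noteq> 1" using ab by blast
    then show ?thesis unfolding g_def by (rule someI_ex)
  qed
  have "inj_on g M"
  proof (rule inj_onI)
    fix e f assume ef: "e \<in> M" "f \<in> M" "g e = g f"
    then have "g e \<in> e \<inter> f" using g by (metis IntI)
    then show "e = f" using m ef(1,2) unfolding is_matching_def by blast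
  qed
  moreover have "g ` M \<subseteq> V - {v \<in> V. degree E v = 1}"
  proof (rule image_subsetI)
    fix e assume "e \<in> M"
    then have "g e \<in> V" using g ME simple_graph_edge_subset[OF sg] by blast
    then show "g e \<in> V - {v \<in> V. degree E v = 1}" using g[OF \<open>e \<in> M\<close>] by simp
  qed
  ultimately have "card M \<le> card (V - {v \<in> V. degree E v = 1})"
    using is_treeD(2)[OF t] by (metis card_inj_on_le finite_Diff)
  then show ?thesis
    using is_treeD(2)[OF t] by (simp add: card_Diff_subset count_degree_mset)
qed

lemma tree_matching_number_le:
  assumes "is_tree V E" and "3 \<le> card V"
  shows "matching_number E \<le> min (card V div 2) (card V - count (degree_mset V E) 1)"
proof (rule matching_number_le)
  show "finite E" using is_treeD(3)[OF assms(1)] .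
  fix M assume "is_matching E M"
  then show "card M \<le> min (card V div 2) (card V - count (degree_mset V E) 1)"
    using matching_card_le_half[OF is_treeD(1)] tree_matching_card_le_non_leaves assms by simp
qed

lemma sum_mset_pos_ge: "\<forall>d\<in>#D. 0 < d \<Longrightarrow> 2 * size D \<le> sum_mset D + count D 1"
  by (induction D) auto

lemma sum_mset_pos_no_two_ge: "\<forall>d\<in>#D. 0 < d \<and> d \<noteq> 2 \<Longrightarrow> 3 * size D \<le> sum_mset D + 2 * count D 1"
  by (induction D) auto

lemma sum_mset_pos_le_two: "\<forall>d\<in>#D. 0 < d \<and> d \<le> 2 \<Longrightarrow> sum_mset D + count D 1 = 2 * size D"
  by (induction D) auto

lemma count_ge_two_add_msetE:
  assumes "2 \<le> count D x"
  obtains D' where "D = add_mset x (add_mset x D')"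
proof -
  obtain D1 where D1: "D = add_mset x D1"
    using assms by (metis count_inI multi_member_split not_numeral_le_zero)
  then have "x \<in># D1" using assms by (simp add: count_inI)
  then show thesis using that D1 by (metis multi_member_split)
qed

definition tree_degree_condition :: "nat multiset \<Rightarrow> bool" where
  "tree_degree_condition D \<longleftrightarrow> 2 \<le> size D \<and> (\<forall>d\<in>#D. 0 < d) \<and> sum_mset D + 2 = 2 * size D"

lemma tree_degree_condition_degree_mset:
  assumes t: "is_tree V E" and "2 \<le> card V"
  shows "tree_degree_condition (degree_mset V E)"
proof -
  have fV: "finite V" using is_treeD(2)[OF t] .
  have "\<forall>d\<in>#degree_mset V E. 0 < d"
    using tree_degree_pos[OF t _ \<open>2 \<le> card V\<close>] fV unfolding degree_mset_def by auto
  moreover have "sum_mset (degree_mset V E) = 2 * card E"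
    using sum_degree_eq_twice_card_edges[OF is_treeD(1)[OF t]]
    unfolding degree_mset_def by (simp add: sum_unfold_sum_mset)
  ultimately show ?thesis
    unfolding tree_degree_condition_def using tree_card_edges[OF t] \<open>2 \<le> card V\<close> fV
    by (simp add: size_degree_mset)
qed

lemma tree_degree_condition_two_ones: "tree_degree_condition D \<Longrightarrow> 2 \<le> count D 1"
  using sum_mset_pos_ge[of D] unfolding tree_degree_condition_def by simp

lemma tree_degree_condition_no_two:
  assumes "tree_degree_condition D" and "2 \<notin># D"
  shows "size D + 2 \<le> 2 * count D 1"
proof -
  have "\<forall>d\<in>#D. 0 < d \<and> d \<noteq> 2" using assms unfolding tree_degree_condition_def by auto
  then show ?thesis
    using sum_mset_pos_no_two_ge[of D] assms(1) unfolding tree_degree_condition_def by simp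
qed

lemma tree_degree_condition_le_two:
  "tree_degree_condition D \<Longrightarrow> \<forall>d\<in>#D. d \<le> 2 \<Longrightarrow> count D 1 = 2"
  using sum_mset_pos_le_two[of D] unfolding tree_degree_condition_def by auto

lemma tree_degree_condition_remove_leaf:
  "tree_degree_condition (add_mset (Suc d) (add_mset 1 D)) \<Longrightarrow> 0 < d
    \<Longrightarrow> tree_degree_condition (add_mset d D)"
  unfolding tree_degree_condition_def by (cases D) auto

lemma tree_degree_condition_remove_pendant_edge:
  "tree_degree_condition (add_mset (Suc d) (add_mset 2 (add_mset 1 D))) \<Longrightarrow> 0 < d
    \<Longrightarrow> tree_degree_condition (add_mset d D)"
  unfolding tree_degree_condition_def by (cases D) auto

lemma tree_degree_condition_size_two: "tree_degree_condition D \<Longrightarrow> size D = 2 \<Longrightarrow> D = {#1, 1#}"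
  by (elim count_ge_two_add_msetE[OF tree_degree_condition_two_ones]) simp

section \<open>Realising degree multisets with large matchings\<close>

text \<open>For at least three vertices the \<open>max\<close> is inactive, as not every vertex is a leaf; it only
  accounts for the single edge, whose matching number is \<open>1\<close>.\<close>

definition matching_bound :: "nat multiset \<Rightarrow> nat" where
  "matching_bound D = min (size D div 2) (max (size D - count D 1) 1)"

lemma matching_bound_add_pendant_edge:
  assumes "2 \<le> d \<or> d = 1 \<and> count D 1 = 1"
  shows "matching_bound (add_mset (Suc d) (add_mset 2 (add_mset 1 D)))
    \<le> Suc (matching_bound (add_mset d D))"
  using assms count_le_size[of D 1] unfolding matching_bound_def
  by (auto simp: min_def max_def split: if_splits; presburger)

lemma matching_bound_add_leaf:
  assumes "2 \<le> d" and "size D' + 2 \<le> 2 * count D' 1" and "D' = add_mset (Suc d) (add_mset 1 D)"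
  shows "matching_bound D' \<le> matching_bound (add_mset d D)"
  using assms count_le_size[of D 1] unfolding matching_bound_def
  by (auto simp: min_def max_def split: if_splits; presburger)

definition tree_realizes :: "nat multiset \<Rightarrow> nat \<Rightarrow> bool" where
  "tree_realizes D k \<longleftrightarrow> (\<exists>V E M. is_tree V E \<and> degree_mset V E = D \<and> is_matching E M \<and> k \<le> card M)"

lemma tree_realizes_mono: "tree_realizes D k \<Longrightarrow> j \<le> k \<Longrightarrow> tree_realizes D j"
  unfolding tree_realizes_def using order.trans by blast

lemma tree_realizes_edge: "tree_realizes {#1, 1#} 1"
proof -
  have "degree_mset {0::nat} {} = add_mset (degree {} 0) {#}"
    unfolding degree_mset_def degree_def by simp
  then have "degree_mset {1, 0} {{0, 1}} = {#1, 1#}"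
    using degree_mset_add_leaf[of "{0}" "{}" 0 1] single_vertex_tree[THEN is_treeD(1)]
    by (simp add: degree_def)
  moreover have "is_tree {1, 0} {{0, 1::nat}}" using tree_add_leaf[OF single_vertex_tree] by simp
  moreover have "is_matching {{0, 1::nat}} {{0, 1}}" unfolding is_matching_def by simp
  ultimately show ?thesis unfolding tree_realizes_def by fastforce
qed

lemma tree_realizes_add_leaf:
  assumes "tree_realizes (add_mset d D) k"
  shows "tree_realizes (add_mset (Suc d) (add_mset 1 D)) k"
proof -
  obtain V E M where t: "is_tree V E" and D: "degree_mset V E = add_mset d D"
    and m: "is_matching E M" "k \<le> card M"
    using assms unfolding tree_realizes_def by blast
  obtain x where x: "x \<in> V" "degree E x = d"
    using degree_mset_memberE[OF is_treeD(2)[OF t], of d E] D by auto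
  then have "degree_mset V E = add_mset (degree E x) D" using D by simp
  then obtain w where "is_tree (insert w V) (insert {x, w} E)"
    "degree_mset (insert w V) (insert {x, w} E) = add_mset (Suc d) (add_mset 1 D)"
    using tree_attach_leaf[OF t x(1)] x(2) by blast
  moreover have "is_matching (insert {x, w} E) M" using is_matching_mono[OF m(1)] by blast
  ultimately show ?thesis unfolding tree_realizes_def using m(2) by blast
qed

lemma tree_realizes_add_pendant_edge:
  assumes "tree_realizes (add_mset d D) k"
  shows "tree_realizes (add_mset (Suc d) (add_mset 2 (add_mset 1 D))) (Suc k)"
proof -
  obtain V E M where t: "is_tree V E" and D: "degree_mset V E = add_mset d D"
    and m: "is_matching E M" "k \<le> card M"
    using assms unfolding tree_realizes_def by blast
  obtain x where x: "x \<in> V" "degree E x = d"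
    using degree_mset_memberE[OF is_treeD(2)[OF t], of d E] D by auto
  then have "degree_mset V E = add_mset (degree E x) D" using D by simp
  then obtain u where u: "u \<notin> V" and t1: "is_tree (insert u V) (insert {x, u} E)"
    and D1: "degree_mset (insert u V) (insert {x, u} E)
      = add_mset (Suc (degree E x)) (add_mset 1 D)"
    using tree_attach_leaf[OF t x(1)] by blast
  define V1 E1 where "V1 = insert u V" and "E1 = insert {x, u} E"
  have u1: "u \<in> V1" "degree E1 u = 1"
    unfolding V1_def E1_def using degree_add_leaf(1)[OF is_treeD(1)[OF t] x(1) u] by simp_all
  have "degree_mset V1 E1 = add_mset (degree E1 u) (add_mset (Suc d) D)"
    using D1 u1(2) x(2) unfolding V1_def E1_def by (simp add: add_mset_commute)
  then obtain w where w: "w \<notin> V1" and t2: "is_tree (insert w V1) (insert {u, w} E1)" and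
    "degree_mset (insert w V1) (insert {u, w} E1)
      = add_mset (Suc (degree E1 u)) (add_mset 1 (add_mset (Suc d) D))"
    using tree_attach_leaf[OF t1[folded V1_def E1_def] u1(1)] by blast
  moreover have
    "add_mset (Suc (degree E1 u)) (add_mset 1 (add_mset (Suc d) D))
      = add_mset (Suc d) (add_mset 2 (add_mset 1 D))"
    using u1(2) by (simp add: multiset_eq_iff)
  ultimately have D2:
    "degree_mset (insert w V1) (insert {u, w} E1) = add_mset (Suc d) (add_mset 2 (add_mset 1 D))"
    by simp
  have "w \<notin> V" "E \<subseteq> insert {u, w} E1" using w unfolding V1_def E1_def by auto
  then have "is_matching (insert {u, w} E1) (insert {u, w} M)" "Suc k \<le> card (insert {u, w} M)"
    using is_matching_insert_new_edge[OF is_treeD(1)[OF t] m(1) u] m(2) by auto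
  then show ?thesis unfolding tree_realizes_def using t2 D2 by blast
qed

lemma tree_realizes_matching_bound_pendant_step:
  assumes cond: "tree_degree_condition D" and D: "D = add_mset (Suc d) (add_mset 2 (add_mset 1 D0))"
    and d: "2 \<le> d \<or> d = 1 \<and> count D0 1 = 1"
    and IH: "\<And>D'. tree_degree_condition D' \<Longrightarrow> size D' < size D
      \<Longrightarrow> tree_realizes D' (matching_bound D')"
  shows "tree_realizes D (matching_bound D)"
proof -
  have "tree_degree_condition (add_mset d D0)"
    using tree_degree_condition_remove_pendant_edge cond D d by auto
  then have "tree_realizes (add_mset d D0) (matching_bound (add_mset d D0))" using IH D by simp
  then have "tree_realizes D (Suc (matching_bound (add_mset d D0)))"
    using tree_realizes_add_pendant_edge D by simp
  then show ?thesis using tree_realizes_mono matching_bound_add_pendant_edge[OF d] D by simp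
qed

lemma tree_realizes_matching_bound_leaf_step:
  assumes cond: "tree_degree_condition D" and D: "D = add_mset (Suc d) (add_mset 1 D0)"
    and "2 \<le> d" and "2 \<notin># D"
    and IH: "\<And>D'. tree_degree_condition D' \<Longrightarrow> size D' < size D
      \<Longrightarrow> tree_realizes D' (matching_bound D')"
  shows "tree_realizes D (matching_bound D)"
proof -
  have "tree_degree_condition (add_mset d D0)"
    using tree_degree_condition_remove_leaf cond D \<open>2 \<le> d\<close> by simp
  then have "tree_realizes (add_mset d D0) (matching_bound (add_mset d D0))" using IH D by simp
  then have "tree_realizes D (matching_bound (add_mset d D0))"
    using tree_realizes_add_leaf D by simp
  moreover have "size D + 2 \<le> 2 * count D 1" using tree_degree_condition_no_two[OF cond \<open>2 \<notin># D\<close>] .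
  ultimately show ?thesis using tree_realizes_mono matching_bound_add_leaf[OF \<open>2 \<le> d\<close> _ D] by simp
qed

lemma tree_realizes_matching_bound_hub:
  assumes cond: "tree_degree_condition D" and "x \<in># D" "3 \<le> x"
    and IH: "\<And>D'. tree_degree_condition D' \<Longrightarrow> size D' < size D
      \<Longrightarrow> tree_realizes D' (matching_bound D')"
  shows "tree_realizes D (matching_bound D)"
proof -
  define d where "d = x - 1"
  have x: "x = Suc d" "2 \<le> d" using \<open>3 \<le> x\<close> unfolding d_def by simp_all
  have "1 \<in># D - {#x#}"
    using tree_degree_condition_two_ones[OF cond] \<open>3 \<le> x\<close>
      by (simp add: in_diff_count flip: count_greater_zero_iff)
  then obtain D1 where D: "D = add_mset (Suc d) (add_mset 1 D1)"
    using \<open>x \<in># D\<close> x by (metis insert_DiffM multi_member_split)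
  show ?thesis
  proof (cases "2 \<in># D1")
    case True
    then obtain D0 where "D = add_mset (Suc d) (add_mset 2 (add_mset 1 D0))"
      using D by (metis add_mset_commute multi_member_split)
    then show ?thesis using tree_realizes_matching_bound_pendant_step cond x(2) IH by blast
  next
    case False
    then have "2 \<notin># D" using D x by simp
    then show ?thesis using tree_realizes_matching_bound_leaf_step[OF cond D x(2)] IH by blast
  qed
qed

lemma tree_realizes_matching_bound_path:
  assumes cond: "tree_degree_condition D" and "3 \<le> size D" and le2: "\<forall>d\<in>#D. d \<le> 2"
    and IH: "\<And>D'. tree_degree_condition D' \<Longrightarrow> size D' < size D
      \<Longrightarrow> tree_realizes D' (matching_bound D')"
  shows "tree_realizes D (matching_bound D)"
proof -
  have "count D 1 = 2" using tree_degree_condition_le_two[OF cond le2] .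
  moreover obtain D1 where "D = add_mset 1 (add_mset 1 D1)"
    using count_ge_two_add_msetE[of D 1] calculation by auto
  ultimately have D1: "D = add_mset 1 (add_mset 1 D1)" "count D1 1 = 0" by simp_all
  have twos: "y = 2" if "y \<in># D1" for y
  proof -
    have "0 < y" "y \<le> 2" using that D1(1) le2 cond unfolding tree_degree_condition_def by auto
    moreover have "y \<noteq> 1" using that D1(2) by (metis count_eq_zero_iff)
    ultimately show ?thesis by simp
  qed
  have "D1 \<noteq> {#}" using D1(1) \<open>3 \<le> size D\<close> by auto
  then have "2 \<in># D1" using twos by (metis multiset_nonemptyE)
  then obtain D2 where D2: "D1 = add_mset 2 D2" by (blast dest: multi_member_split)
  show ?thesis
  proof (cases "D2 = {#}")
    case True
    then have "D = add_mset (Suc 1) (add_mset 1 {#1#})" using D1 D2 by simp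
    then show ?thesis
      using tree_realizes_add_leaf[of 1 "{#1#}" 1] tree_realizes_edge unfolding matching_bound_def
        by simp
  next
    case False
    then obtain z where "z \<in># D2" by (meson multiset_nonemptyE)
    then have "2 \<in># D2" using twos[of z] D2 by simp
    then obtain D0 where "D2 = add_mset 2 D0" by (blast dest: multi_member_split)
    then have "D = add_mset (Suc 1) (add_mset 2 (add_mset 1 (add_mset 1 D0)))" "count D0 1 = 0"
      using D1 D2 by (simp_all add: add_mset_commute)
    then show ?thesis
      using tree_realizes_matching_bound_pendant_step[OF cond _ _ IH, of 1 "add_mset 1 D0"] by simp
  qed
qed

lemma tree_realizes_matching_bound:
  "tree_degree_condition D \<Longrightarrow> tree_realizes D (matching_bound D)"
proof (induction "size D" arbitrary: D rule: less_induct)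
  case less
  have IH: "tree_realizes D' (matching_bound D')"
    if "tree_degree_condition D'" "size D' < size D" for D'
    using less.hyps that by blast
  have "2 \<le> size D" using less.prems unfolding tree_degree_condition_def by auto
  consider (edge) "size D = 2" | (hub) x where "x \<in># D" "3 \<le> x" | (path) "3 \<le> size D" "\<forall>d\<in>#D. d \<le> 2"
    using \<open>2 \<le> size D\<close> by force
  then show ?case
  proof cases
    case edge
    then have "D = {#1, 1#}" using tree_degree_condition_size_two less.prems by blast
    then show ?thesis using tree_realizes_edge unfolding matching_bound_def by simp
  next
    case hub
    then show ?thesis using tree_realizes_matching_bound_hub[OF less.prems _ _ IH] by blast
  next
    case path
    then show ?thesis using tree_realizes_matching_bound_path[OF less.prems _ _ IH] by blast
  qed
qed

lemma mset_degree_sequence: "finite V \<Longrightarrow> mset (degree_sequence V E) = degree_mset V E"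
  unfolding degree_sequence_def degree_mset_def
    by (metis mset_map mset_rev mset_sort mset_sorted_list_of_multiset
      sorted_list_of_mset_set)

lemma degree_sequence_eqI:
  assumes "finite V" "finite V'" "degree_mset V E = degree_mset V' E'"
  shows "degree_sequence V E = degree_sequence V' E'"
proof -
  have "mset (map (degree E) (sorted_list_of_set V))
      = mset (map (degree E') (sorted_list_of_set V'))"
    using mset_degree_sequence[of V E] mset_degree_sequence[of V' E'] assms
    unfolding degree_sequence_def by simp
  then have "sort (map (degree E) (sorted_list_of_set V))
      = sort (map (degree E') (sorted_list_of_set V'))"
    by (intro properties_for_sort) simp_all
  then show ?thesis unfolding degree_sequence_def by simp
qed

lemma tree_degree_sequence_matching_number_le:
  assumes t: "is_tree V E" and d: "degree_sequence V E = d" and "3 \<le> length d"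
  shows "matching_number E \<le> min (length d div 2) (length d - count_list d 1)"
proof -
  have "degree_mset V E = mset d" using mset_degree_sequence[OF is_treeD(2)[OF t], of E] d by simp
  moreover have "card V = length d"
    using size_degree_mset[OF is_treeD(2)[OF t], of E] calculation by simp
  ultimately show ?thesis
    using tree_matching_number_le[OF t] \<open>3 \<le> length d\<close> by (simp add: count_mset)
qed

lemma tree_degree_sequence_realizes_matching_number:
  assumes "tree_degree_sequence d" "3 \<le> length d"
  obtains V E where "is_tree V E" "degree_sequence V E = d"
    "min (length d div 2) (length d - count_list d 1) \<le> matching_number E"
proof -
  obtain V0 E0 where t0: "is_tree V0 E0" and d: "degree_sequence V0 E0 = d"
    using assms(1) unfolding tree_degree_sequence_def by blast
  have D: "degree_mset V0 E0 = mset d"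
    using mset_degree_sequence[OF is_treeD(2)[OF t0], of E0] d by simp
  then have "card V0 = length d" using size_degree_mset[OF is_treeD(2)[OF t0], of E0] by simp
  then have "tree_degree_condition (mset d)"
    using tree_degree_condition_degree_mset[OF t0] D assms(2) by simp
  then obtain V E M where t: "is_tree V E" and DE: "degree_mset V E = mset d"
    and m: "is_matching E M"
    and "matching_bound (mset d) \<le> card M"
    using tree_realizes_matching_bound unfolding tree_realizes_def by blast
  then have "min (length d div 2) (length d - count_list d 1) \<le> card M"
    unfolding matching_bound_def by (simp add: count_mset)
  also have "\<dots> \<le> matching_number E" using card_le_matching_number[OF is_treeD(3)[OF t] m] .
  moreover have "degree_sequence V E = d"
    using degree_sequence_eqI[OF is_treeD(2)[OF t] is_treeD(2)[OF t0], of E E0] D DE d by simp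
  ultimately show thesis using that t by simp
qed

theorem lemma1:
  fixes d :: "nat list"
  assumes "tree_degree_sequence d" and "length d \<ge> 3"
  shows "nu_T_max d = min (length d div 2) (length d - count_list d 1)"
proof -
  define S where "S = {matching_number E | V E. is_tree V E \<and> degree_sequence V E = d}"
  let ?m = "min (length d div 2) (length d - count_list d 1)"
  have bound: "\<forall>x\<in>S. x \<le> ?m"
    unfolding S_def using tree_degree_sequence_matching_number_le assms(2) by blast
  obtain V E where "is_tree V E" "degree_sequence V E = d" "?m \<le> matching_number E"
    using tree_degree_sequence_realizes_matching_number[OF assms] .
  then have "?m \<in> S"
    using bound unfolding S_def by (metis (mono_tags, lifting) le_antisym mem_Collect_eq)
  moreover have "finite S" using bound finite_nat_set_iff_bounded_le by blast
  ultimately show ?thesis unfolding nu_T_max_def S_def[symmetric]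
    using bound by (intro Max_eqI) auto
qed

end
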